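(* Consider a matched pair study ($n_i=2$). Suppose the bounded null $\overline H_0$ holds, $\Gamma^\star_{(k)}\le\Gamma_0$ for some $1\le k\le I$ and $\Gamma_0\in[1,\infty]$, and the statistic $t(\cdot,\cdot)$ is effect increasing or differential increasing. Then $\overline p_{\Gamma_0;k}$, computed with $q_{ij}=q_{ij}(Y)$ (i.e. pretending Fisher's sharp null holds so that $Y(0)=Y$) and $T=t(Z,Y)$, is still a valid $p$-value: $\mathbb P(\overline p_{\Gamma_0;k}\le\alpha)\le\alpha$ for all $\alpha\in(0,1)$.
   Context: Setting: $I$ matched pairs; potential outcomes fixed; $Z\in\mathcal Z=\{z\in\{0,1\}^{2I}:z_{i1}+z_{i2}=1\ \forall i\}$ random with true mechanism $\mathbb P(Z=z)=\prod_i\prod_j(p^\star_{ij})^{z_{ij}}$, $p^\star_{i1}+p^\star_{i2}=1$; $\Gamma^\star_i=\max_jp^\star_{ij}/\min_kp^\star_{ik}\in[1,\infty]$, $\Gamma^\star_{(k)}$ its $k$th smallest. Observed $Y=Z\circ Y(1)+(1-Z)\circ Y(0)$ ($\circ$ = elementwise product). Bounded null $\overline H_0$: $Y_{ij}(1)\le Y_{ij}(0)$ for all $i,j$. The statistic has the form $t(z,y)=\sum_i\sum_jz_{ij}q_{ij}(y)$ for functions $q_{ij}:\mathbb R^{2I}\to\mathbb R$. Effect increasing: $t(z,y+z\circ\eta+(1-z)\circ\xi)\ge t(z,y)$ for all $z\in\mathcal Z$, $y,\eta,\xi$ with $\eta\succcurlyeq0\succcurlyeq\xi$. Differential increasing: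 $t(z,y+a\circ\eta)-t(z,y)\le t(a,y+a\circ\eta)-t(a,y)$ for all $z,a\in\mathcal Z$, $y$, and $\eta\succcurlyeq0$. With $q_{ij}=q_{ij}(Y)$: $\mathcal I_k$ is a set of $k$ pairs with smallest $|q_{i1}-q_{i2}|$; $\overline T(\Gamma_0;k)$ is a sum of independent variables equal, for $i\in\mathcal I_k$, to $\max\{q_{i1},q_{i2}\}$ w.p. $\Gamma_0/(1+\Gamma_0)$ (w.p. 1 if $\Gamma_0=\infty$) and $\min\{q_{i1},q_{i2}\}$ otherwise, and for $i\notin\mathcal I_k$ to $\max\{q_{i1},q_{i2}\}$ w.p. 1; $\overline p_{\Gamma_0;k}=\mathbb P(\overline T(\Gamma_0;k)\ge c)|_{c=T}$ with $q_{ij}$ held fixed. *)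

theory Defs
  imports "HOL-Probability.Probability" "HOL-Library.Multiset"
begin

(* Units are indexed by (i, j) with i :: 'i a pair (finite type, I = CARD('i))
   and j :: bool the unit within the pair (True ~ j=1, False ~ j=2). *)

definition Zset :: "('i \<times> bool \<Rightarrow> real) set" where
  "Zset = {z. \<forall>i. (z (i,True) = 0 \<or> z (i,True) = 1) \<and> (z (i,False) = 0 \<or> z (i,False) = 1)
               \<and> z (i,True) + z (i,False) = 1}"

definition Z_of :: "('i \<Rightarrow> bool) \<Rightarrow> ('i \<times> bool \<Rightarrow> real)" where
  "Z_of b = (\<lambda>(i,j). if j = b i then 1 else 0)"

(* true assignment mechanism: independent across pairs, P(Z=z) = prod_i prod_j p_ij^z_ij *)
definition Z_pmf :: "('i::finite \<times> bool \<Rightarrow> real) \<Rightarrow> ('i \<times> bool \<Rightarrow> real) pmf" where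
  "Z_pmf p = map_pmf Z_of (Pi_pmf UNIV False (\<lambda>i. bernoulli_pmf (p (i,True))))"

definition observed :: "('i \<times> bool \<Rightarrow> real) \<Rightarrow> ('i \<times> bool \<Rightarrow> real) \<Rightarrow> ('i \<times> bool \<Rightarrow> real) \<Rightarrow> ('i \<times> bool \<Rightarrow> real)" where
  "observed Y1 Y0 z = (\<lambda>u. z u * Y1 u + (1 - z u) * Y0 u)"

definition tstat :: "('i::finite \<times> bool \<Rightarrow> ('i \<times> bool \<Rightarrow> real) \<Rightarrow> real)
                     \<Rightarrow> ('i \<times> bool \<Rightarrow> real) \<Rightarrow> ('i \<times> bool \<Rightarrow> real) \<Rightarrow> real" where
  "tstat q z y = (\<Sum>u\<in>UNIV. z u * q u y)"

definition effect_increasing :: "('i::finite \<times> bool \<Rightarrow> ('i \<times> bool \<Rightarrow> real) \<Rightarrow> real) \<Rightarrow> bool" where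
  "effect_increasing q \<longleftrightarrow>
     (\<forall>z\<in>Zset. \<forall>y \<eta> \<xi>. (\<forall>u. \<eta> u \<ge> 0) \<and> (\<forall>u. \<xi> u \<le> 0) \<longrightarrow>
        tstat q z (\<lambda>u. y u + z u * \<eta> u + (1 - z u) * \<xi> u) \<ge> tstat q z y)"

definition differential_increasing :: "('i::finite \<times> bool \<Rightarrow> ('i \<times> bool \<Rightarrow> real) \<Rightarrow> real) \<Rightarrow> bool" where
  "differential_increasing q \<longleftrightarrow>
     (\<forall>z\<in>Zset. \<forall>a\<in>Zset. \<forall>y \<eta>. (\<forall>u. \<eta> u \<ge> 0) \<longrightarrow>
        tstat q z (\<lambda>u. y u + a u * \<eta> u) - tstat q z y
          \<le> tstat q a (\<lambda>u. y u + a u * \<eta> u) - tstat q a y)"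

definition Gamma :: "('i \<times> bool \<Rightarrow> real) \<Rightarrow> 'i \<Rightarrow> ereal" where
  "Gamma p i = (let mx = max (p (i,True)) (p (i,False)); mn = min (p (i,True)) (p (i,False))
                in if mn = 0 then \<infinity> else ereal (mx / mn))"

definition kth_smallest :: "nat \<Rightarrow> ('i::finite \<Rightarrow> ereal) \<Rightarrow> ereal" where
  "kth_smallest k f = sorted_list_of_multiset (image_mset f (mset_set UNIV)) ! (k - 1)"

definition is_smallest_set ::
  "('i::finite \<times> bool \<Rightarrow> ('i \<times> bool \<Rightarrow> real) \<Rightarrow> real) \<Rightarrow> nat \<Rightarrow> ('i \<times> bool \<Rightarrow> real) \<Rightarrow> 'i set \<Rightarrow> bool" where
  "is_smallest_set q k y K \<longleftrightarrow> card K = k \<and>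
     (\<forall>i\<in>K. \<forall>i'. i' \<notin> K \<longrightarrow> \<bar>q (i,True) y - q (i,False) y\<bar> \<le> \<bar>q (i',True) y - q (i',False) y\<bar>)"

definition pi_of :: "ereal \<Rightarrow> real" where
  "pi_of G0 = (if G0 = \<infinity> then 1 else real_of_ereal G0 / (1 + real_of_ereal G0))"

definition Tbar :: "('i::finite \<times> bool \<Rightarrow> ('i \<times> bool \<Rightarrow> real) \<Rightarrow> real) \<Rightarrow> 'i set \<Rightarrow> ('i \<times> bool \<Rightarrow> real)
                    \<Rightarrow> ('i \<Rightarrow> bool) \<Rightarrow> real" where
  "Tbar q K y b = (\<Sum>i\<in>UNIV. if i \<in> K \<and> \<not> b i then min (q (i,True) y) (q (i,False) y)
                                else max (q (i,True) y) (q (i,False) y))"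

definition pbar :: "('i::finite \<times> bool \<Rightarrow> ('i \<times> bool \<Rightarrow> real) \<Rightarrow> real) \<Rightarrow> ereal \<Rightarrow> 'i set
                    \<Rightarrow> ('i \<times> bool \<Rightarrow> real) \<Rightarrow> real \<Rightarrow> real" where
  "pbar q G0 K y c = measure_pmf.prob (Pi_pmf K True (\<lambda>_. bernoulli_pmf (pi_of G0)))
                        {b. Tbar q K y b \<ge> c}"

end

theory Submission
  imports Defs
begin

(*
  Under the bounded null, either monotonicity condition yields a ranking g of assignments such
  that g z \<le> g w forces t(z, y_z) \<le> t(w, y_z), where y_z is the outcome vector observed under z
  (for effect increasing g w = t(w, y_w), for differential increasing g w = t(w, Y0)).  So it
  suffices to bound, for fixed y, the tail P(t(W, y) \<ge> c) of the true assignment W by pbar.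

  Pick k pairs S with \<Gamma>*_i \<le> \<Gamma>0.  On a pair of S the larger assignment probability is at most
  \<pi> = \<Gamma>0/(1+\<Gamma>0), so the true draw is a mixture: with probability \<pi> a suitably biased coin decides,
  otherwise the unit with the smaller q is treated.  Coupling shows that t(W, y) is stochastically dominated by
  the statistic that takes max q off S and, on S, min q exactly when an independent
  Bernoulli(\<pi>) coin fails.  A bijection from the k pairs of smallest gap |q_i1 - q_i2| onto S
  that fixes their common pairs only increases the gaps, which gives the bound pbar.  Finally,
  a p-value that dominates the upper-tail probability of a ranking is valid.
*)

lemma measure_pmf_mono_on_support:
  assumes "A \<inter> set_pmf P \<subseteq> B"
  shows "measure_pmf.prob P A \<le> measure_pmf.prob P B"
proof -
  have "measure_pmf.prob P A = measure_pmf.prob P (A \<inter> set_pmf P)"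
    by (simp add: measure_Int_set_pmf)
  also have "\<dots> \<le> measure_pmf.prob P B"
    using assms by (intro measure_pmf.finite_measure_mono) auto
  finally show ?thesis .
qed

text \<open>The least rank in the rejection region bounds the whole region.\<close>
lemma measure_pmf_pvalue_valid:
  fixes g :: "'a \<Rightarrow> real" and pv :: "'a \<Rightarrow> real"
  assumes fin: "finite (set_pmf P)" and "0 \<le> \<alpha>"
    and dominated: "\<And>z. z \<in> set_pmf P \<Longrightarrow> measure_pmf.prob P {w. g z \<le> g w} \<le> pv z"
  shows "measure_pmf.prob P {z. pv z \<le> \<alpha>} \<le> \<alpha>"
proof -
  define S where "S = {z. pv z \<le> \<alpha>} \<inter> set_pmf P"
  show ?thesis
  proof (cases "S = {}")
    case True
    then have "measure_pmf.prob P {z. pv z \<le> \<alpha>} \<le> measure_pmf.prob P {}"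
      by (intro measure_pmf_mono_on_support) (auto simp: S_def)
    with \<open>0 \<le> \<alpha>\<close> show ?thesis by simp
  next
    case False
    moreover have "finite S" using fin by (simp add: S_def)
    ultimately obtain z0 where z0: "z0 \<in> S" and least: "\<And>z. z \<in> S \<Longrightarrow> g z0 \<le> g z"
      using arg_min_if_finite[of S g] arg_min_least[of S _ g] by metis
    have "measure_pmf.prob P {z. pv z \<le> \<alpha>} \<le> measure_pmf.prob P {w. g z0 \<le> g w}"
      using least by (intro measure_pmf_mono_on_support) (auto simp: S_def)
    also have "\<dots> \<le> pv z0" using z0 dominated by (simp add: S_def)
    also have "\<dots> \<le> \<alpha>" using z0 by (simp add: S_def)
    finally show ?thesis .
  qed
qed

lemma bernoulli_pmf_one: "bernoulli_pmf 1 = return_pmf True"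
  by (rule pmf_eqI) (simp split: split_indicator)

lemma bind_bernoulli_pmf_if:
  assumes "0 \<le> s" "s \<le> 1" "0 \<le> t" "t \<le> 1"
  shows "bind_pmf (bernoulli_pmf s) (\<lambda>v. if v then bernoulli_pmf t else return_pmf b)
       = bernoulli_pmf (s * t + (1 - s) * of_bool b)"
proof (rule pmf_eqI)
  fix x :: bool
  have "0 \<le> s * t" "s * t \<le> s" using assms by (simp_all add: mult_left_le)
  then have "0 \<le> 1 + s * t - s" "1 + s * t - s \<le> 1" "s * t \<le> 1" using assms by linarith+
  then show "pmf (bind_pmf (bernoulli_pmf s) (\<lambda>v. if v then bernoulli_pmf t else return_pmf b)) x
       = pmf (bernoulli_pmf (s * t + (1 - s) * of_bool b)) x"
    using assms by (cases x; cases b) (auto simp: pmf_bind algebra_simps)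
qed

lemma bernoulli_pmf_as_mixture:
  assumes "0 \<le> p" "p \<le> 1" "0 < s" "s \<le> 1" "pmf (bernoulli_pmf p) (\<not> b) \<le> s"
  obtains K where "bernoulli_pmf p = bind_pmf (bernoulli_pmf s) K" "K False = return_pmf b"
proof -
  define t where "t = (p - (1 - s) * of_bool b) / s"
  have "p - (1 - s) * of_bool b \<le> s" "0 \<le> p - (1 - s) * of_bool b"
    using assms by (cases b; simp)+
  then have "0 \<le> t" "t \<le> 1" "s * t + (1 - s) * of_bool b = p"
    using \<open>0 < s\<close> by (simp_all add: t_def field_simps)
  then have "bernoulli_pmf p = bind_pmf (bernoulli_pmf s) (\<lambda>v. if v then bernoulli_pmf t else return_pmf b)"
    using assms by (simp add: bind_bernoulli_pmf_if)
  then show ?thesis by (rule that) simp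
qed

lemma Pi_pmf_bind_measure_le:
  fixes P :: "'a::finite \<Rightarrow> 'b pmf" and K :: "'a \<Rightarrow> 'b \<Rightarrow> 'c pmf"
  assumes R: "\<And>i v x. x \<in> set_pmf (K i v) \<Longrightarrow> R i x v"
    and EF: "\<And>x v. \<forall>i. R i (x i) (v i) \<Longrightarrow> x \<in> E \<Longrightarrow> v \<in> F"
  shows "measure_pmf.prob (Pi_pmf UNIV d (\<lambda>i. bind_pmf (P i) (K i))) E
           \<le> measure_pmf.prob (Pi_pmf UNIV d' P) F"
proof -
  define V where "V = Pi_pmf UNIV d' P"
  define X where "X v = Pi_pmf UNIV d (\<lambda>i. K i (v i))" for v
  define J where "J = bind_pmf V (\<lambda>v. map_pmf (\<lambda>x. (x, v)) (X v))"
  have fst_J: "map_pmf fst J = Pi_pmf UNIV d (\<lambda>i. bind_pmf (P i) (K i))"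
    unfolding J_def V_def X_def
    by (simp add: Pi_pmf_bind[where d'=d'] map_bind_pmf map_pmf_comp o_def)
  have snd_J: "map_pmf snd J = V"
    by (simp add: J_def map_bind_pmf map_pmf_comp o_def map_pmf_const bind_return_pmf')
  have "measure_pmf.prob (Pi_pmf UNIV d (\<lambda>i. bind_pmf (P i) (K i))) E = measure_pmf.prob J (fst -` E)"
    by (simp flip: fst_J add: measure_map_pmf)
  also have "\<dots> \<le> measure_pmf.prob J (snd -` F)"
  proof (rule measure_pmf_mono_on_support, clarsimp)
    fix x v assume "x \<in> E" "(x, v) \<in> set_pmf J"
    then have "\<forall>i. x i \<in> set_pmf (K i (v i))"
      by (auto simp: J_def X_def set_Pi_pmf PiE_dflt_def)
    with R EF \<open>x \<in> E\<close> show "v \<in> F" by blast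
  qed
  also have "\<dots> = measure_pmf.prob V F"
    by (simp flip: snd_J add: measure_map_pmf)
  finally show ?thesis unfolding V_def .
qed

lemma k_le_card_if_kth_smallest_le:
  fixes f :: "'i::finite \<Rightarrow> ereal"
  assumes "1 \<le> k" "k \<le> CARD('i)" "kth_smallest k f \<le> G"
  shows "k \<le> card {i. f i \<le> G}"
proof -
  define M where "M = image_mset f (mset_set (UNIV::'i set))"
  define xs where "xs = sorted_list_of_multiset M"
  have "sorted xs" by (simp add: xs_def)
  have "mset xs = M" by (simp add: xs_def)
  have len: "length xs = CARD('i)"
    using arg_cong[OF \<open>mset xs = M\<close>, of size] by (simp add: M_def size_mset_set)
  have "xs ! (k - 1) \<le> G" using assms(3) by (simp add: kth_smallest_def xs_def M_def)
  have "\<forall>x\<in>set (take k xs). x \<le> G"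
  proof
    fix x assume "x \<in> set (take k xs)"
    then obtain j where "j < k" "j < length xs" "x = xs ! j"
      by (auto simp: in_set_conv_nth)
    then have "x \<le> xs ! (k - 1)"
      using \<open>sorted xs\<close> assms(2) len by (simp add: sorted_nth_mono)
    with \<open>xs ! (k - 1) \<le> G\<close> show "x \<le> G" by simp
  qed
  then have "filter (\<lambda>x. x \<le> G) (take k xs) = take k xs" by simp
  then have "k = length (filter (\<lambda>x. x \<le> G) (take k xs))"
    using assms(2) len by simp
  also have "\<dots> \<le> length (filter (\<lambda>x. x \<le> G) xs)"
    by (metis append_take_drop_id filter_append length_append le_add1)
  also have "\<dots> = size (filter_mset (\<lambda>x. x \<le> G) M)"
    by (metis \<open>mset xs = M\<close> mset_filter size_mset)
  also have "\<dots> = card {i. f i \<le> G}"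
    by (simp add: M_def filter_mset_image_mset filter_mset_mset_set size_mset_set)
  finally show ?thesis .
qed

lemma obtain_bij_betw_fixing_common:
  assumes "finite K" "finite S" "card K = card S"
  obtains \<tau> where "bij_betw \<tau> K S" "\<And>x. x \<notin> K \<Longrightarrow> \<tau> x \<notin> S"
    "\<And>x. x \<in> K \<Longrightarrow> \<tau> x \<in> K \<Longrightarrow> \<tau> x = x"
proof -
  have "card (K - S) = card (S - K)"
    using assms by (simp add: card_Diff_subset_Int Int_commute)
  then obtain h where h: "bij_betw h (K - S) (S - K)"
    using assms by (metis finite_Diff finite_same_card_bij)
  define \<tau> where
    "\<tau> x = (if x \<in> K - S then h x else if x \<in> S - K then inv_into (K - S) h x else x)" for x
  have "bij_betw \<tau> (K - S) (S - K)"
    using h by (rule bij_betw_cong[THEN iffD1, rotated]) (simp add: \<tau>_def)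
  moreover have "bij_betw \<tau> (K \<inter> S) (K \<inter> S)"
    by (rule bij_betw_cong[THEN iffD2, OF _ bij_betw_id]) (simp add: \<tau>_def)
  ultimately have "bij_betw \<tau> ((K \<inter> S) \<union> (K - S)) ((K \<inter> S) \<union> (S - K))"
    by (intro bij_betw_combine) blast+
  moreover have "(K \<inter> S) \<union> (K - S) = K" "(K \<inter> S) \<union> (S - K) = S" by blast+
  ultimately have "bij_betw \<tau> K S" by simp
  moreover have "\<tau> x \<notin> S" if "x \<notin> K" for x
    using that h inv_into_into[of x h "K - S"] by (auto simp: \<tau>_def bij_betw_def)
  moreover have "\<tau> x = x" if "x \<in> K" "\<tau> x \<in> K" for x
    using that h by (auto simp: \<tau>_def bij_betw_def split: if_splits)
  ultimately show ?thesis using that by blast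
qed

lemma Z_of_in_Zset: "Z_of b \<in> Zset"
  by (auto simp: Z_of_def Zset_def)

lemma Zset_values: "z \<in> Zset \<Longrightarrow> z u = 0 \<or> z u = 1"
  by (cases u; case_tac b) (auto simp: Zset_def)

lemma set_pmf_Z_pmf: "set_pmf (Z_pmf p) \<subseteq> Zset"
  by (auto simp: Z_pmf_def Z_of_in_Zset)

lemma finite_set_pmf_Z_pmf: "finite (set_pmf (Z_pmf p))"
  by (rule finite_subset[of _ "range Z_of"]) (auto simp: Z_pmf_def)

lemma tstat_Z_of:
  "tstat q (Z_of b) y = (\<Sum>i\<in>UNIV. if b i then q (i, True) y else q (i, False) y)"
proof -
  have "tstat q (Z_of b) y = (\<Sum>(i, j)\<in>UNIV \<times> UNIV. Z_of b (i, j) * q (i, j) y)"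
    by (simp add: tstat_def UNIV_Times_UNIV)
  also have "\<dots> = (\<Sum>i\<in>UNIV. \<Sum>j\<in>UNIV. Z_of b (i, j) * q (i, j) y)"
    by (rule sum.cartesian_product[symmetric])
  also have "\<dots> = (\<Sum>i\<in>UNIV. if b i then q (i, True) y else q (i, False) y)"
    by (rule sum.cong) (auto simp: UNIV_bool Z_of_def)
  finally show ?thesis .
qed

lemma pi_of_bounds: "1 \<le> G0 \<Longrightarrow> 1/2 \<le> pi_of G0 \<and> pi_of G0 \<le> 1"
  by (cases G0) (auto simp: pi_of_def field_simps)

lemma max_le_pi_of_if_Gamma_le:
  assumes "0 \<le> p (i, True)" "0 \<le> p (i, False)" "p (i, True) + p (i, False) = 1"
    and "Gamma p i \<le> G0" "1 \<le> G0"
  shows "max (p (i, True)) (p (i, False)) \<le> pi_of G0"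
proof (cases G0)
  case (real g)
  define mx where "mx = max (p (i, True)) (p (i, False))"
  define mn where "mn = min (p (i, True)) (p (i, False))"
  have "mn \<noteq> 0"
    using assms real by (auto simp: Gamma_def Let_def mn_def)
  then have "mn > 0" "mx / mn \<le> g"
    using assms real by (auto simp: Gamma_def Let_def mn_def mx_def)
  moreover have "mn = 1 - mx" using assms by (auto simp: mx_def mn_def)
  ultimately have "mx * (1 + g) \<le> g" by (simp add: divide_le_eq algebra_simps)
  moreover have "1 + g > 0" using assms real by simp
  ultimately show ?thesis using real by (simp add: pi_of_def mx_def le_divide_eq)
qed (use assms in \<open>auto simp: pi_of_def\<close>)

lemma Tbar_eq_sum_max_minus_gaps:
  "Tbar q K y b = (\<Sum>i\<in>UNIV. max (q (i, True) y) (q (i, False) y))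
     - (\<Sum>i\<in>K. if b i then 0 else \<bar>q (i, True) y - q (i, False) y\<bar>)"
proof -
  have "Tbar q K y b = (\<Sum>i\<in>UNIV. max (q (i, True) y) (q (i, False) y)
      - (if i \<in> K then if b i then 0 else \<bar>q (i, True) y - q (i, False) y\<bar> else 0))"
    unfolding Tbar_def by (rule sum.cong) auto
  then show ?thesis
    by (simp add: sum_subtractf sum.inter_restrict[symmetric])
qed

lemma Tbar_le_reindex:
  assumes "bij_betw \<tau> K S"
    and gap_le: "\<And>i. i \<in> K \<Longrightarrow>
      \<bar>q (i, True) y - q (i, False) y\<bar> \<le> \<bar>q (\<tau> i, True) y - q (\<tau> i, False) y\<bar>"
  shows "Tbar q S y b \<le> Tbar q K y (b \<circ> \<tau>)"
proof -
  define D where "D i = \<bar>q (i, True) y - q (i, False) y\<bar>" for i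
  have "(\<Sum>i\<in>K. if b (\<tau> i) then 0 else D i) \<le> (\<Sum>i\<in>K. if b (\<tau> i) then 0 else D (\<tau> i))"
    using gap_le by (intro sum_mono) (simp add: D_def)
  also have "\<dots> = (\<Sum>i\<in>S. if b i then 0 else D i)"
    using sum.reindex_bij_betw[OF assms(1), of "\<lambda>i. if b i then 0 else D i"] by simp
  finally show ?thesis
    unfolding D_def by (simp add: Tbar_eq_sum_max_minus_gaps)
qed

lemma Tbar_tail_le_smallest_set:
  assumes K: "is_smallest_set q k y K" and "card S = k"
  shows "measure_pmf.prob (Pi_pmf S True (\<lambda>_. bernoulli_pmf \<pi>)) {b. c \<le> Tbar q S y b}
       \<le> measure_pmf.prob (Pi_pmf K True (\<lambda>_. bernoulli_pmf \<pi>)) {b. c \<le> Tbar q K y b}"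
proof -
  obtain \<tau> where \<tau>: "bij_betw \<tau> K S" "\<And>x. x \<notin> K \<Longrightarrow> \<tau> x \<notin> S"
    "\<And>x. x \<in> K \<Longrightarrow> \<tau> x \<in> K \<Longrightarrow> \<tau> x = x"
    using obtain_bij_betw_fixing_common[of K S] K \<open>card S = k\<close>
    by (auto simp: is_smallest_set_def)
  have "Tbar q S y b \<le> Tbar q K y (b \<circ> \<tau>)" for b
  proof (rule Tbar_le_reindex[OF \<tau>(1)])
    fix i assume "i \<in> K"
    then show "\<bar>q (i, True) y - q (i, False) y\<bar> \<le> \<bar>q (\<tau> i, True) y - q (\<tau> i, False) y\<bar>"
      using K \<tau>(3)[of i] by (cases "\<tau> i \<in> K") (auto simp: is_smallest_set_def)
  qed
  then have "measure_pmf.prob (Pi_pmf S True (\<lambda>_. bernoulli_pmf \<pi>)) {b. c \<le> Tbar q S y b}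
       \<le> measure_pmf.prob (map_pmf (\<lambda>b. b \<circ> \<tau>) (Pi_pmf S True (\<lambda>_. bernoulli_pmf \<pi>)))
           {b. c \<le> Tbar q K y b}"
    unfolding measure_map_pmf by (intro measure_pmf.finite_measure_mono) (auto intro: order_trans)
  also have "map_pmf (\<lambda>b. b \<circ> \<tau>) (Pi_pmf S True (\<lambda>_. bernoulli_pmf \<pi>))
      = Pi_pmf K True (\<lambda>_. bernoulli_pmf \<pi>)"
    by (rule Pi_pmf_bij_betw[symmetric]) (use \<tau> in auto)
  finally show ?thesis .
qed

lemma tstat_tail_le_Tbar_tail:
  fixes p :: "'i::finite \<times> bool \<Rightarrow> real"
  assumes p_nonneg: "\<forall>u. 0 \<le> p u" and p_sum: "\<forall>i. p (i, True) + p (i, False) = 1"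
    and "1 \<le> G0" and S: "\<forall>i\<in>S. Gamma p i \<le> G0"
  shows "measure_pmf.prob (Z_pmf p) {w. c \<le> tstat q w y}
       \<le> measure_pmf.prob (Pi_pmf S True (\<lambda>_. bernoulli_pmf (pi_of G0))) {b. c \<le> Tbar q S y b}"
proof -
  define s where "s i = (if i \<in> S then pi_of G0 else 1)" for i
  define low where "low i = (q (i, True) y < q (i, False) y)" for i
  have s_bounds: "0 < s i" "s i \<le> 1" for i
    using pi_of_bounds[OF \<open>1 \<le> G0\<close>] by (auto simp: s_def)
  have "\<exists>K. bernoulli_pmf (p (i, True)) = bind_pmf (bernoulli_pmf (s i)) K
           \<and> K False = return_pmf (low i)" for i
  proof -
    have p_i: "0 \<le> p (i, True)" "0 \<le> p (i, False)" "p (i, True) + p (i, False) = 1"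
      using p_nonneg p_sum by auto
    have "p (i, True) \<le> 1" using p_i by linarith
    have "max (p (i, True)) (p (i, False)) \<le> s i"
      using p_i max_le_pi_of_if_Gamma_le[of p i G0] S \<open>1 \<le> G0\<close>
      by (cases "i \<in> S") (auto simp: s_def)
    then have "pmf (bernoulli_pmf (p (i, True))) (\<not> low i) \<le> s i"
      using p_i \<open>p (i, True) \<le> 1\<close> by (cases "low i") (auto simp: eq_diff_eq')
    from bernoulli_pmf_as_mixture[OF p_i(1) \<open>p (i, True) \<le> 1\<close> s_bounds[of i] this]
    show ?thesis by blast
  qed
  then obtain K where mix: "\<And>i. bernoulli_pmf (p (i, True)) = bind_pmf (bernoulli_pmf (s i)) (K i)"
    and fail: "\<And>i. K i False = return_pmf (low i)"
    by metis
  have "measure_pmf.prob (Z_pmf p) {w. c \<le> tstat q w y}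
      = measure_pmf.prob (Pi_pmf UNIV False (\<lambda>i. bind_pmf (bernoulli_pmf (s i)) (K i)))
          {x. c \<le> (\<Sum>i\<in>UNIV. if x i then q (i, True) y else q (i, False) y)}"
    by (simp add: Z_pmf_def measure_map_pmf vimage_def tstat_Z_of mix)
  also have "\<dots> \<le> measure_pmf.prob (Pi_pmf UNIV True (\<lambda>i. bernoulli_pmf (s i))) {b. c \<le> Tbar q S y b}"
  proof (rule Pi_pmf_bind_measure_le[where R = "\<lambda>i x v. \<not> v \<longrightarrow> x = low i"])
    fix i v x assume "x \<in> set_pmf (K i v)"
    then show "\<not> v \<longrightarrow> x = low i" by (auto simp: fail)
  next
    fix x b assume coupled: "\<forall>i. \<not> b i \<longrightarrow> x i = low i"
      and "x \<in> {x. c \<le> (\<Sum>i\<in>UNIV. if x i then q (i, True) y else q (i, False) y)}"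
    moreover have "(\<Sum>i\<in>UNIV. if x i then q (i, True) y else q (i, False) y) \<le> Tbar q S y b"
      unfolding Tbar_def using coupled by (intro sum_mono) (auto simp: low_def)
    ultimately show "b \<in> {b. c \<le> Tbar q S y b}" by simp
  qed
  also have "Pi_pmf UNIV True (\<lambda>i. bernoulli_pmf (s i)) = Pi_pmf S True (\<lambda>_. bernoulli_pmf (pi_of G0))"
  proof -
    have "(\<lambda>i. bernoulli_pmf (s i)) = (\<lambda>i. if i \<in> S then bernoulli_pmf (pi_of G0) else return_pmf True)"
      by (simp add: fun_eq_iff s_def bernoulli_pmf_one)
    then show ?thesis by (simp add: Pi_pmf_if_set)
  qed
  finally show ?thesis .
qed

lemma tstat_tail_le_pbar:
  fixes p :: "'i::finite \<times> bool \<Rightarrow> real"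
  assumes "\<forall>u. 0 \<le> p u" "\<forall>i. p (i, True) + p (i, False) = 1" "1 \<le> G0"
    and "is_smallest_set q k y K" "\<forall>i\<in>S. Gamma p i \<le> G0" "card S = k"
  shows "measure_pmf.prob (Z_pmf p) {w. c \<le> tstat q w y} \<le> pbar q G0 K y c"
  unfolding pbar_def
  using tstat_tail_le_Tbar_tail[OF assms(1,2,3,5)] Tbar_tail_le_smallest_set[OF assms(4,6)]
  by (rule order_trans)

text \<open>Under the bounded null the outcomes imputed from \<open>z\<close> arise from those imputed from \<open>w\<close> by raising
  the treated and lowering the control responses of \<open>w\<close>.\<close>
lemma effect_increasing_rank:
  assumes "effect_increasing q" "\<forall>u. Y1 u \<le> Y0 u" "w \<in> Zset" "z \<in> Zset"
    and "tstat q z (observed Y1 Y0 z) \<le> tstat q w (observed Y1 Y0 w)"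
  shows "tstat q z (observed Y1 Y0 z) \<le> tstat q w (observed Y1 Y0 z)"
proof -
  define \<eta> where "\<eta> u = (1 - z u) * (Y0 u - Y1 u)" for u
  define \<xi> where "\<xi> u = - (z u * (Y0 u - Y1 u))" for u
  have "0 \<le> \<eta> u" "\<xi> u \<le> 0" for u
    using Zset_values[OF \<open>z \<in> Zset\<close>, of u] assms(2)[rule_format, of u] by (auto simp: \<eta>_def \<xi>_def)
  then have "tstat q w (observed Y1 Y0 w)
      \<le> tstat q w (\<lambda>u. observed Y1 Y0 w u + w u * \<eta> u + (1 - w u) * \<xi> u)"
    using assms(1,3) by (auto simp: effect_increasing_def)
  also have "(\<lambda>u. observed Y1 Y0 w u + w u * \<eta> u + (1 - w u) * \<xi> u) = observed Y1 Y0 z"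
    by (simp add: fun_eq_iff observed_def \<eta>_def \<xi>_def algebra_simps)
  finally show ?thesis using assms(5) by simp
qed

text \<open>Adding \<open>Y0 - Y1\<close> to the treated units of \<open>z\<close> turns the observed outcomes into \<open>Y0\<close>.\<close>
lemma differential_increasing_rank:
  assumes "differential_increasing q" "\<forall>u. Y1 u \<le> Y0 u" "w \<in> Zset" "z \<in> Zset"
    and "tstat q z Y0 \<le> tstat q w Y0"
  shows "tstat q z (observed Y1 Y0 z) \<le> tstat q w (observed Y1 Y0 z)"
proof -
  define \<eta> where "\<eta> u = Y0 u - Y1 u" for u
  have "0 \<le> \<eta> u" for u using assms(2)[rule_format, of u] by (simp add: \<eta>_def)
  then have "tstat q w (\<lambda>u. observed Y1 Y0 z u + z u * \<eta> u) - tstat q w (observed Y1 Y0 z)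
      \<le> tstat q z (\<lambda>u. observed Y1 Y0 z u + z u * \<eta> u) - tstat q z (observed Y1 Y0 z)"
    using assms(1,3,4) by (auto simp: differential_increasing_def)
  moreover have "(\<lambda>u. observed Y1 Y0 z u + z u * \<eta> u) = Y0"
    by (simp add: fun_eq_iff observed_def \<eta>_def algebra_simps)
  ultimately show ?thesis using assms(5) by simp
qed

theorem theoremA2:
  fixes Y1 Y0 :: "'i::finite \<times> bool \<Rightarrow> real"
    and p :: "'i \<times> bool \<Rightarrow> real"
    and q :: "'i \<times> bool \<Rightarrow> ('i \<times> bool \<Rightarrow> real) \<Rightarrow> real"
    and k :: nat and G0 :: ereal
    and Ik :: "('i \<times> bool \<Rightarrow> real) \<Rightarrow> 'i set"
    and \<alpha> :: real
  assumes p_nonneg: "\<forall>u. p u \<ge> 0"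
    and p_sum: "\<forall>i. p (i,True) + p (i,False) = 1"
    and bounded_null: "\<forall>u. Y1 u \<le> Y0 u"
    and k_ge: "1 \<le> k" and k_le: "k \<le> CARD('i)"
    and G0_ge: "1 \<le> G0"
    and sens: "kth_smallest k (Gamma p) \<le> G0"
    and incr: "effect_increasing q \<or> differential_increasing q"
    and Ik: "\<forall>y. is_smallest_set q k y (Ik y)"
    and \<alpha>_pos: "0 < \<alpha>" and \<alpha>_lt: "\<alpha> < 1"
  shows "measure_pmf.prob (Z_pmf p)
           {z. pbar q G0 (Ik (observed Y1 Y0 z)) (observed Y1 Y0 z)
                 (tstat q z (observed Y1 Y0 z)) \<le> \<alpha>} \<le> \<alpha>"
proof -
  obtain S where S: "S \<subseteq> {i. Gamma p i \<le> G0}" "card S = k"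
    using k_le_card_if_kth_smallest_le[OF k_ge k_le sens] by (meson obtain_subset_with_card_n)
  define y where "y z = observed Y1 Y0 z" for z
  define rank where "rank w = (if effect_increasing q then tstat q w (y w) else tstat q w Y0)" for w
  have rank: "tstat q z (y z) \<le> tstat q w (y z)"
    if "z \<in> Zset" "w \<in> Zset" "rank z \<le> rank w" for z w
    using that incr effect_increasing_rank[OF _ bounded_null] differential_increasing_rank[OF _ bounded_null]
    by (auto simp: rank_def y_def split: if_splits)
  have "measure_pmf.prob (Z_pmf p) {w. rank z \<le> rank w} \<le> pbar q G0 (Ik (y z)) (y z) (tstat q z (y z))"
    if "z \<in> set_pmf (Z_pmf p)" for z
  proof -
    have "measure_pmf.prob (Z_pmf p) {w. rank z \<le> rank w}
        \<le> measure_pmf.prob (Z_pmf p) {w. tstat q z (y z) \<le> tstat q w (y z)}"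
      using that rank set_pmf_Z_pmf by (intro measure_pmf_mono_on_support) blast
    also have "\<dots> \<le> pbar q G0 (Ik (y z)) (y z) (tstat q z (y z))"
      using S Ik by (intro tstat_tail_le_pbar[OF p_nonneg p_sum G0_ge]) auto
    finally show ?thesis .
  qed
  then show ?thesis
    unfolding y_def using finite_set_pmf_Z_pmf \<alpha>_pos by (intro measure_pmf_pvalue_valid) auto
qed

end
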